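(* Let $X$ be a regular totally Lindelöf space and $\mathcal{F}$ a filter base on $X$ stable under countable intersections. Then there is a compact set $K\subseteq X$ such that $\mathcal{F}\vee G_\delta(K):=\{F_0\cap F_1: F_0,F_1\in\mathcal{F}\cup G_\delta(K)\}$ is a total filter base stable under countable intersections that extends $\mathcal{F}$.
   Context: A filter base on $X$ is a nonempty $\mathcal{F}\subseteq\mathcal{P}(X)$ with $\emptyset\notin\mathcal{F}$ and closed under pairwise intersections; it is stable under countable intersections if for every countable $S\subseteq\mathcal{F}$ there is $H\in\mathcal{F}$ with $H\subseteq\bigcap S$. $G_\delta(K)=\{G\subseteq X: K\subseteq G,\ G\text{ is a countable intersection of open subsets of }X\}$. $ad(\mathcal{F})=\bigcap\{\overline{F}:F\in\mathcal{F}\}$; $\mathcal{F}$ is total if every filter base $\mathcal{H}\supseteq\mathcal{F}$ satisfies $ad(\mathcal{H})\neq\emptyset$. $X$ is totally Lindelöf if every filter base on $X$ stable under countable intersections is contained in a total filter base on $X$ stable under countable intersections. *)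

theory Defs
  imports "HOL-Analysis.Analysis"
begin

definition filter_base :: "'a topology \<Rightarrow> 'a set set \<Rightarrow> bool" where
  "filter_base X \<F> \<longleftrightarrow> \<F> \<noteq> {} \<and> \<F> \<subseteq> Pow (topspace X) \<and> {} \<notin> \<F> \<and>
     (\<forall>A\<in>\<F>. \<forall>B\<in>\<F>. A \<inter> B \<in> \<F>)"

definition countably_stable :: "'a set set \<Rightarrow> bool" where
  "countably_stable \<F> \<longleftrightarrow> (\<forall>S. S \<subseteq> \<F> \<and> countable S \<longrightarrow> (\<exists>H\<in>\<F>. H \<subseteq> \<Inter>S))"

definition Gdelta_of :: "'a topology \<Rightarrow> 'a set \<Rightarrow> 'a set set" where
  "Gdelta_of X K = {G. K \<subseteq> G \<and>
     (\<exists>\<U>. countable \<U> \<and> (\<forall>U\<in>\<U>. openin X U) \<and> G = topspace X \<inter> \<Inter>\<U>)}"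

definition adherence :: "'a topology \<Rightarrow> 'a set set \<Rightarrow> 'a set" where
  "adherence X \<F> = topspace X \<inter> \<Inter>{X closure_of F | F. F \<in> \<F>}"

definition total_fb :: "'a topology \<Rightarrow> 'a set set \<Rightarrow> bool" where
  "total_fb X \<F> \<longleftrightarrow> (\<forall>\<H>. filter_base X \<H> \<and> \<F> \<subseteq> \<H> \<longrightarrow> adherence X \<H> \<noteq> {})"

definition totally_lindelof :: "'a topology \<Rightarrow> bool" where
  "totally_lindelof X \<longleftrightarrow> (\<forall>\<F>. filter_base X \<F> \<and> countably_stable \<F> \<longrightarrow>
     (\<exists>\<H>. \<F> \<subseteq> \<H> \<and> filter_base X \<H> \<and> countably_stable \<H> \<and> total_fb X \<H>))"

definition fb_join :: "'a set set \<Rightarrow> 'a set set \<Rightarrow> 'a set set" where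
  "fb_join \<F> \<G> = {A \<inter> B | A B. A \<in> \<F> \<union> \<G> \<and> B \<in> \<F> \<union> \<G>}"

end

theory Submission
  imports Defs
begin

text \<open>Extend \<open>\<F>\<close> to a total filter base \<open>H\<close> stable under countable intersections and let
  \<open>K\<close> be its adherence. By totality, every open cover of \<open>K\<close> has a finite subfamily whose union
  contains a member of \<open>H\<close>; with regularity this makes \<open>K\<close> compact, and with countable stability
  every \<open>G\<^sub>\<delta>\<close> set around \<open>K\<close> contains a member of \<open>H\<close>, so \<open>\<F>\<close> and \<open>G\<^sub>\<delta>(K)\<close> mesh.
  Totality of the join comes from compactness alone: any family containing all open
  neighbourhoods of a compact set is total.\<close>

lemma filter_base_finite_Inter:
  assumes "filter_base X H" "finite S" "S \<subseteq> H"
  shows "\<exists>h\<in>H. h \<subseteq> \<Inter>S"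
  using assms(2,3)
proof (induction S rule: finite_induct)
  case empty
  then show ?case using assms(1) unfolding filter_base_def by auto
next
  case (insert A S)
  then obtain h where "h \<in> H" "h \<subseteq> \<Inter>S" by auto
  with insert.prems show ?case
    using assms(1) unfolding filter_base_def by (intro bexI[of _ "A \<inter> h"]) auto
qed

lemma adherence_antimono: "\<A> \<subseteq> \<B> \<Longrightarrow> adherence X \<B> \<subseteq> adherence X \<A>"
  unfolding adherence_def by blast

lemma total_fb_mono: "total_fb X \<A> \<Longrightarrow> \<A> \<subseteq> \<B> \<Longrightarrow> total_fb X \<B>"
  unfolding total_fb_def by blast

lemma filter_base_Int_nonempty:
  "filter_base X H \<Longrightarrow> A \<in> H \<Longrightarrow> B \<in> H \<Longrightarrow> A \<inter> B \<noteq> {}"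
  unfolding filter_base_def by metis

lemma adherence_nonempty_total_fb: "filter_base X H \<Longrightarrow> total_fb X H \<Longrightarrow> adherence X H \<noteq> {}"
  unfolding total_fb_def by blast

lemma total_fb_finite_subcover:
  assumes fb: "filter_base X H" and tot: "total_fb X H"
    and opn: "\<And>V. V \<in> \<V> \<Longrightarrow> openin X V" and cover: "adherence X H \<subseteq> \<Union>\<V>"
  shows "\<exists>h\<in>H. \<exists>\<W>. finite \<W> \<and> \<W> \<subseteq> \<V> \<and> h \<subseteq> \<Union>\<W>"
proof (rule ccontr)
  assume none: "\<not> ?thesis"
  \<comment> \<open>then the traces of \<open>H\<close> off finite unions from \<open>\<V>\<close> form a filter base, whose
    adherence must avoid \<open>\<Union>\<V>\<close>\<close>
  define H' where "H' = {h - \<Union>\<W> | h \<W>. h \<in> H \<and> finite \<W> \<and> \<W> \<subseteq> \<V>}"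
  have "H \<subseteq> H'"
    unfolding H'_def by (force intro: exI[of _ "{}"])
  have "filter_base X H'"
    unfolding filter_base_def
  proof (intro conjI ballI)
    show "H' \<noteq> {}" "H' \<subseteq> Pow (topspace X)"
      using fb \<open>H \<subseteq> H'\<close> unfolding H'_def filter_base_def by auto
    show "{} \<notin> H'"
      using none unfolding H'_def by auto
    fix A B assume "A \<in> H'" "B \<in> H'"
    then obtain h1 \<W>1 h2 \<W>2 where
      "A = h1 - \<Union>\<W>1" "h1 \<in> H" "finite \<W>1" "\<W>1 \<subseteq> \<V>"
      "B = h2 - \<Union>\<W>2" "h2 \<in> H" "finite \<W>2" "\<W>2 \<subseteq> \<V>"
      unfolding H'_def by blast
    moreover have "h1 \<inter> h2 \<in> H"
      using fb \<open>h1 \<in> H\<close> \<open>h2 \<in> H\<close> unfolding filter_base_def by blast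
    ultimately show "A \<inter> B \<in> H'"
      unfolding H'_def by (intro CollectI exI[of _ "h1 \<inter> h2"] exI[of _ "\<W>1 \<union> \<W>2"]) auto
  qed
  then obtain x where x: "x \<in> adherence X H'"
    using tot \<open>H \<subseteq> H'\<close> unfolding total_fb_def by blast
  then obtain V where "V \<in> \<V>" "x \<in> V"
    using cover adherence_antimono[OF \<open>H \<subseteq> H'\<close>] by blast
  obtain h where "h \<in> H"
    using fb unfolding filter_base_def by auto
  then have "h - V \<in> H'"
    unfolding H'_def using \<open>V \<in> \<V>\<close> by (intro CollectI exI[of _ h] exI[of _ "{V}"]) auto
  then have "x \<in> X closure_of (h - V)"
    using x unfolding adherence_def by blast
  also have "\<dots> \<subseteq> X closure_of (topspace X - V)"
    by (rule closure_of_mono) (use \<open>h \<in> H\<close> fb in \<open>auto simp: filter_base_def\<close>)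
  also have "\<dots> = topspace X - V"
    using opn[OF \<open>V \<in> \<V>\<close>] by (simp add: closure_of_closedin closedin_diff)
  finally show False
    using \<open>x \<in> V\<close> by blast
qed

lemma total_fb_open_superset:
  assumes "filter_base X H" "total_fb X H" "openin X U" "adherence X H \<subseteq> U"
  shows "\<exists>h\<in>H. h \<subseteq> U"
proof -
  obtain h \<W> where "h \<in> H" "\<W> \<subseteq> {U}" "h \<subseteq> \<Union>\<W>"
    using total_fb_finite_subcover[of X H "{U}"] assms by auto
  then show ?thesis by blast
qed

text \<open>Refine the cover by open sets whose closures lie in its members; a finite part of the
  refinement covers a member of \<open>H\<close>, hence its closure, which contains the adherence.\<close>
lemma compactin_adherence_total_fb:
  assumes reg: "regular_space X" and fb: "filter_base X H" and tot: "total_fb X H"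
  shows "compactin X (adherence X H)"
  unfolding compactin_def
proof (intro conjI allI impI)
  let ?K = "adherence X H"
  show "?K \<subseteq> topspace X"
    unfolding adherence_def by blast
  fix \<U> assume \<U>: "(\<forall>U\<in>\<U>. openin X U) \<and> ?K \<subseteq> \<Union>\<U>"
  define \<W> where "\<W> = {W. openin X W \<and> (\<exists>U\<in>\<U>. X closure_of W \<subseteq> U)}"
  have "?K \<subseteq> \<Union>\<W>"
  proof
    fix x assume "x \<in> ?K"
    then obtain U where "U \<in> \<U>" "x \<in> U" "x \<in> topspace X"
      using \<U> unfolding adherence_def by blast
    moreover have "closedin X (topspace X - U)"
      using \<U> \<open>U \<in> \<U>\<close> by (simp add: closedin_diff)
    ultimately obtain W where W: "openin X W" "x \<in> W" "disjnt (topspace X - U) (X closure_of W)"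
      using reg unfolding regular_space by blast
    then have "X closure_of W \<subseteq> U"
      using closure_of_subset_topspace[of X W] unfolding disjnt_def by blast
    then show "x \<in> \<Union>\<W>"
      unfolding \<W>_def using W \<open>U \<in> \<U>\<close> by blast
  qed
  moreover have "openin X W" if "W \<in> \<W>" for W
    using that unfolding \<W>_def by blast
  ultimately obtain h \<W>0 where h: "h \<in> H" "finite \<W>0" "\<W>0 \<subseteq> \<W>" "h \<subseteq> \<Union>\<W>0"
    using total_fb_finite_subcover[OF fb tot, of \<W>] by blast
  have "\<forall>W\<in>\<W>0. \<exists>U\<in>\<U>. X closure_of W \<subseteq> U"
    using h(3) unfolding \<W>_def by blast
  then obtain g where g: "\<And>W. W \<in> \<W>0 \<Longrightarrow> g W \<in> \<U> \<and> X closure_of W \<subseteq> g W"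
    by metis
  have "?K \<subseteq> X closure_of h"
    using h(1) unfolding adherence_def by blast
  also have "\<dots> \<subseteq> X closure_of (\<Union>\<W>0)"
    using h(4) by (rule closure_of_mono)
  also have "\<dots> = (\<Union>W\<in>\<W>0. X closure_of W)"
    using h(2) by (rule closure_of_Union)
  also have "\<dots> \<subseteq> \<Union>(g ` \<W>0)"
    using g by blast
  finally show "\<exists>\<F>. finite \<F> \<and> \<F> \<subseteq> \<U> \<and> ?K \<subseteq> \<Union>\<F>"
    using h(2) g by (intro exI[of _ "g ` \<W>0"]) auto
qed

lemma Gdelta_of_subset: "G \<in> Gdelta_of X K \<Longrightarrow> K \<subseteq> G \<and> G \<subseteq> topspace X"
  unfolding Gdelta_of_def by auto

lemma openin_in_Gdelta_of: "openin X U \<Longrightarrow> K \<subseteq> U \<Longrightarrow> U \<in> Gdelta_of X K"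
  unfolding Gdelta_of_def using openin_subset[of X U]
  by (intro CollectI conjI exI[of _ "{U}"]) auto

lemma Gdelta_of_countable_Inter:
  assumes "S \<subseteq> Gdelta_of X K" "countable S" "K \<subseteq> topspace X"
  shows "topspace X \<inter> \<Inter>S \<in> Gdelta_of X K"
proof -
  have "\<forall>G\<in>S. \<exists>\<U>. countable \<U> \<and> (\<forall>U\<in>\<U>. openin X U) \<and> G = topspace X \<inter> \<Inter>\<U>"
    using assms(1) unfolding Gdelta_of_def by blast
  then obtain u where u: "\<forall>G\<in>S. countable (u G) \<and> (\<forall>U\<in>u G. openin X U) \<and>
      G = topspace X \<inter> \<Inter>(u G)"
    by (rule bchoice[elim_format]) blast
  have "topspace X \<inter> \<Inter>S = topspace X \<inter> \<Inter>(\<Union>(u ` S))" (is "_ = ?R")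
  proof
    have "?R \<subseteq> G" if "G \<in> S" for G
      using that by (subst bspec[OF u that, THEN conjunct2, THEN conjunct2]) auto
    then show "?R \<subseteq> topspace X \<inter> \<Inter>S"
      by blast
  qed (use u in auto)
  moreover have "countable (\<Union>(u ` S))" "\<forall>U\<in>\<Union>(u ` S). openin X U"
    using u assms(2) by auto
  moreover have "K \<subseteq> topspace X \<inter> \<Inter>S"
    using assms Gdelta_of_subset by blast
  ultimately show ?thesis
    unfolding Gdelta_of_def by blast
qed

lemma filter_base_Gdelta_of:
  assumes "K \<subseteq> topspace X" "K \<noteq> {}"
  shows "filter_base X (Gdelta_of X K)"
  unfolding filter_base_def
proof (intro conjI ballI)
  show "Gdelta_of X K \<noteq> {}"
    using openin_in_Gdelta_of[OF openin_topspace assms(1)] by blast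
  show "Gdelta_of X K \<subseteq> Pow (topspace X)" "{} \<notin> Gdelta_of X K"
    using Gdelta_of_subset assms(2) by blast+
  fix A B assume "A \<in> Gdelta_of X K" "B \<in> Gdelta_of X K"
  then have "topspace X \<inter> \<Inter>{A, B} \<in> Gdelta_of X K"
    using assms(1) by (intro Gdelta_of_countable_Inter) auto
  moreover have "topspace X \<inter> \<Inter>{A, B} = A \<inter> B"
    using Gdelta_of_subset[OF \<open>A \<in> Gdelta_of X K\<close>] by auto
  ultimately show "A \<inter> B \<in> Gdelta_of X K" by simp
qed

lemma countably_stable_Gdelta_of:
  "K \<subseteq> topspace X \<Longrightarrow> countably_stable (Gdelta_of X K)"
  unfolding countably_stable_def
  by (intro allI impI bexI[OF _ Gdelta_of_countable_Inter]) auto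

lemma Gdelta_of_adherence_contains_member:
  assumes fb: "filter_base X H" and tot: "total_fb X H" and st: "countably_stable H"
    and G: "G \<in> Gdelta_of X (adherence X H)"
  shows "\<exists>h\<in>H. h \<subseteq> G"
proof -
  obtain \<U> where \<U>: "countable \<U>" "\<forall>U\<in>\<U>. openin X U" "G = topspace X \<inter> \<Inter>\<U>"
    and "adherence X H \<subseteq> G"
    using G unfolding Gdelta_of_def by blast
  then have "\<forall>U\<in>\<U>. \<exists>h\<in>H. h \<subseteq> U"
    using total_fb_open_superset[OF fb tot] by blast
  then obtain c where c: "\<forall>U\<in>\<U>. c U \<in> H \<and> c U \<subseteq> U"
    by metis
  moreover have "countable (c ` \<U>)"
    using \<U>(1) by simp
  ultimately obtain h where h: "h \<in> H" "h \<subseteq> \<Inter>(c ` \<U>)"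
    using st unfolding countably_stable_def by blast
  moreover have "h \<subseteq> topspace X"
    using h(1) fb unfolding filter_base_def by blast
  ultimately have "h \<subseteq> G"
    using c \<U>(3) by blast
  with h(1) show ?thesis ..
qed

lemma total_fb_compact_nhds:
  assumes K: "compactin X K" and nhds: "\<And>U. openin X U \<Longrightarrow> K \<subseteq> U \<Longrightarrow> U \<in> \<G>"
  shows "total_fb X \<G>"
  unfolding total_fb_def
proof (intro allI impI notI)
  fix H assume H: "filter_base X H \<and> \<G> \<subseteq> H" and empty: "adherence X H = {}"
  then have fb: "filter_base X H" by blast
  \<comment> \<open>the complements of the closures cover \<open>K\<close>; a finite union of them is an open
    neighbourhood of \<open>K\<close>, hence in \<open>H\<close>, yet disjoint from a member of \<open>H\<close>\<close>
  let ?co = "\<lambda>h. topspace X - X closure_of h"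
  have open_co: "openin X (?co h)" for h
    by (simp add: openin_diff)
  have "K \<subseteq> \<Union>(?co ` H)"
    using empty compactin_subset_topspace[OF K] unfolding adherence_def by blast
  moreover have "\<forall>C\<in>?co ` H. openin X C"
    using open_co by blast
  ultimately obtain \<C> where "finite \<C>" "\<C> \<subseteq> ?co ` H" "K \<subseteq> \<Union>\<C>"
    using K[unfolded compactin_def, THEN conjunct2, rule_format, of "?co ` H"] by blast
  then obtain \<H>0 where \<H>0: "finite \<H>0" "\<H>0 \<subseteq> H" "K \<subseteq> \<Union>(?co ` \<H>0)"
    by (metis finite_subset_image)
  obtain h where h: "h \<in> H" "h \<subseteq> \<Inter>\<H>0"
    using filter_base_finite_Inter[OF fb \<H>0(1,2)] by blast
  have "openin X (\<Union>(?co ` \<H>0))"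
    using open_co by (intro openin_Union) blast
  then have "\<Union>(?co ` \<H>0) \<in> H"
    using nhds[OF _ \<H>0(3)] H by auto
  then have "h \<inter> \<Union>(?co ` \<H>0) \<noteq> {}"
    using filter_base_Int_nonempty[OF fb h(1)] by blast
  moreover have "h \<subseteq> X closure_of h'" if "h' \<in> \<H>0" for h'
  proof -
    have "h' \<subseteq> topspace X"
      using that \<H>0(2) fb unfolding filter_base_def by blast
    then show ?thesis
      using closure_of_subset[of h' X] h(2) that by blast
  qed
  ultimately show False
    by blast
qed

lemma fb_join_upper: "\<F> \<union> \<G> \<subseteq> fb_join \<F> \<G>"
  unfolding fb_join_def by (metis (mono_tags, lifting) Int_absorb mem_Collect_eq subsetI)

lemma Int_fb_join:
  assumes F: "\<And>A B. A \<in> \<F> \<Longrightarrow> B \<in> \<F> \<Longrightarrow> A \<inter> B \<in> \<F>"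
    and G: "\<And>A B. A \<in> \<G> \<Longrightarrow> B \<in> \<G> \<Longrightarrow> A \<inter> B \<in> \<G>"
    and C: "C \<in> \<F> \<union> \<G>" and S: "S \<in> fb_join \<F> \<G>"
  shows "C \<inter> S \<in> fb_join \<F> \<G>"
proof -
  obtain A B where AB: "S = A \<inter> B" "A \<in> \<F> \<union> \<G>" "B \<in> \<F> \<union> \<G>"
    using S unfolding fb_join_def by blast
  have "C \<inter> S = (C \<inter> A) \<inter> B" "C \<inter> S = A \<inter> (C \<inter> B)" "C \<inter> S = C \<inter> (A \<inter> B)"
    using AB by auto
  \<comment> \<open>two of \<open>C\<close>, \<open>A\<close>, \<open>B\<close> lie in the same family\<close>
  moreover have "C \<inter> A \<in> \<F> \<union> \<G> \<or> C \<inter> B \<in> \<F> \<union> \<G> \<or> A \<inter> B \<in> \<F> \<union> \<G>"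
    using C AB F G by blast
  ultimately show ?thesis
    unfolding fb_join_def using C AB by blast
qed

lemma filter_base_fb_join:
  assumes F: "filter_base X \<F>" and G: "filter_base X \<G>"
    and meet: "\<And>A B. A \<in> \<F> \<Longrightarrow> B \<in> \<G> \<Longrightarrow> A \<inter> B \<noteq> {}"
  shows "filter_base X (fb_join \<F> \<G>)"
  unfolding filter_base_def
proof (intro conjI ballI)
  show "fb_join \<F> \<G> \<noteq> {}" "fb_join \<F> \<G> \<subseteq> Pow (topspace X)"
    using F G unfolding filter_base_def fb_join_def by auto
  have "A \<inter> B \<noteq> {}" if "A \<in> \<F> \<union> \<G>" "B \<in> \<F> \<union> \<G>" for A B
    using that F G meet[of A B] meet[of B A] unfolding filter_base_def
    by (metis Int_commute UnE)
  then show "{} \<notin> fb_join \<F> \<G>"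
    unfolding fb_join_def by blast
  have F_Int: "A \<inter> B \<in> \<F>" if "A \<in> \<F>" "B \<in> \<F>" for A B
    using F that unfolding filter_base_def by blast
  have G_Int: "A \<inter> B \<in> \<G>" if "A \<in> \<G>" "B \<in> \<G>" for A B
    using G that unfolding filter_base_def by blast
  fix S T assume "S \<in> fb_join \<F> \<G>" "T \<in> fb_join \<F> \<G>"
  then obtain A B where "S \<inter> T = A \<inter> (B \<inter> T)" "A \<in> \<F> \<union> \<G>" "B \<in> \<F> \<union> \<G>"
    unfolding fb_join_def by blast
  then show "S \<inter> T \<in> fb_join \<F> \<G>"
    using Int_fb_join[OF F_Int G_Int _ Int_fb_join[OF F_Int G_Int _ \<open>T \<in> fb_join \<F> \<G>\<close>]] by simp
qed

lemma countably_stable_fb_join: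
  assumes F: "countably_stable \<F>" and G: "countably_stable \<G>"
  shows "countably_stable (fb_join \<F> \<G>)"
  unfolding countably_stable_def
proof (intro allI impI)
  fix S assume S: "S \<subseteq> fb_join \<F> \<G> \<and> countable S"
  then have "\<forall>s\<in>S. \<exists>A B. s = A \<inter> B \<and> A \<in> \<F> \<union> \<G> \<and> B \<in> \<F> \<union> \<G>"
    unfolding fb_join_def by blast
  then obtain a b where ab: "\<forall>s\<in>S. s = a s \<inter> b s \<and> a s \<in> \<F> \<union> \<G> \<and> b s \<in> \<F> \<union> \<G>"
    by metis
  define P where "P = a ` S \<union> b ` S"
  have "countable P"
    using S unfolding P_def by simp
  then obtain A B where A: "A \<in> \<F>" "A \<subseteq> \<Inter>(P \<inter> \<F>)" and B: "B \<in> \<G>" "B \<subseteq> \<Inter>(P \<inter> \<G>)"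
    using F[unfolded countably_stable_def, rule_format, of "P \<inter> \<F>"]
      G[unfolded countably_stable_def, rule_format, of "P \<inter> \<G>"]
    by (meson countable_Int1 inf_le2)
  have "P \<subseteq> \<F> \<union> \<G>"
    using ab unfolding P_def by blast
  then have "A \<inter> B \<subseteq> \<Inter>P"
    using A(2) B(2) by blast
  also have "\<Inter>P \<subseteq> \<Inter>S"
    using ab unfolding P_def by blast
  finally have "A \<inter> B \<subseteq> \<Inter>S" .
  moreover have "A \<inter> B \<in> fb_join \<F> \<G>"
    using A(1) B(1) unfolding fb_join_def by blast
  ultimately show "\<exists>H\<in>fb_join \<F> \<G>. H \<subseteq> \<Inter>S" by blast
qed

theorem proposition2p4:
  fixes X :: "'a topology" and \<F> :: "'a set set"
  assumes "regular_space X" and "totally_lindelof X"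
    and "filter_base X \<F>" and "countably_stable \<F>"
  shows "\<exists>K. compactin X K \<and>
           filter_base X (fb_join \<F> (Gdelta_of X K)) \<and>
           countably_stable (fb_join \<F> (Gdelta_of X K)) \<and>
           total_fb X (fb_join \<F> (Gdelta_of X K)) \<and>
           \<F> \<subseteq> fb_join \<F> (Gdelta_of X K)"
proof -
  obtain H where FH: "\<F> \<subseteq> H" and fb: "filter_base X H" and st: "countably_stable H"
    and tot: "total_fb X H"
    using assms(2-4) unfolding totally_lindelof_def by blast
  define K where "K = adherence X H"
  have K: "compactin X K" "K \<subseteq> topspace X" "K \<noteq> {}"
    using compactin_adherence_total_fb[OF assms(1) fb tot] compactin_subset_topspace
      adherence_nonempty_total_fb[OF fb tot] unfolding K_def by blast+
  have total_Gdelta: "total_fb X (Gdelta_of X K)"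
    using K(1) by (rule total_fb_compact_nhds) (rule openin_in_Gdelta_of)
  have "A \<inter> G \<noteq> {}" if "A \<in> \<F>" "G \<in> Gdelta_of X K" for A G
    using Gdelta_of_adherence_contains_member[OF fb tot st, of G] FH that
      filter_base_Int_nonempty[OF fb, of A] unfolding K_def by blast
  then have "filter_base X (fb_join \<F> (Gdelta_of X K))"
    using filter_base_fb_join[OF assms(3) filter_base_Gdelta_of[OF K(2,3)]] by blast
  moreover have "countably_stable (fb_join \<F> (Gdelta_of X K))"
    using countably_stable_fb_join[OF assms(4) countably_stable_Gdelta_of[OF K(2)]] .
  moreover have "total_fb X (fb_join \<F> (Gdelta_of X K))"
    using total_Gdelta by (rule total_fb_mono) (use fb_join_upper in blast)
  ultimately show ?thesis
    using K(1) fb_join_upper by blast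
qed

end
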